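(* Let $F$ be as in the context and have a Jacobi inequality with function $b(M,p)$. Let $u\in C^\infty(\overline{B_1(0)})$ be a smooth solution of $F(D^2u,Du)=0$ in $B_1(0)$, and set $b(x):=b(D^2u(x),Du(x))$. Let $a_i<b_i$ ($1\le i\le n$) with $B=\{a_i\le x_i\le b_i\}\subset B_1(0)$, let $0<r<b_1-a_1$, and let $B'=\{x: a_1\le x_1\le b_1-r,\ a_i\le x_i\le b_i \text{ for } i\ge 2\}$. Let $L^0$ be the relative interior of the side $\{x_1=a_1\}\cap B'$ and $R:=\partial B'\setminus L^0$. Define $\eta(x_1)=\frac{1}{b_1-x_1}-\frac{1}{b_1-a_1}$. Then $$\sup_{B'}\eta(x_1)\,b(x)=\sup_{\partial B'}\eta(x_1)\,b(x)\le r^{-1}\sup_{R} b(x).$$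
   Context: Let $F:\mathrm{Sym}(n;\mathbb R)\times\mathbb R^n\to\mathbb R$ be Lipschitz and (degenerate) elliptic: $F(M+P,p)\ge F(M,p)$ for all positive definite $P$, and smooth and strictly elliptic along every smooth solution, i.e. for every smooth solution $u$ of $F(D^2u,Du)=0$ and every $x$, $F$ is smooth near $(D^2u(x),Du(x))$ and $\partial F/\partial M(D^2u(x),Du(x))>0$. The equation **has a Jacobi inequality** if there is a positive Lipschitz function $b(M,p)$ such that for every smooth solution $u$, the function $b(x):=b(D^2u(x),Du(x))$ satisfies, in the viscosity sense, $F^{ij}b_{ij}\ge 2F^{ij}b_ib_j/b$, where $F^{ij}=\frac{\partial F}{\partial M_{ij}}(D^2u,Du)$ and $b_i=\partial_{x_i}b$ (together with higher-derivative bounds not needed here). *)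

theory Defs
  imports "HOL-Analysis.Analysis"
begin

primrec Ck_on :: "nat \<Rightarrow> 'a::euclidean_space set \<Rightarrow> ('a \<Rightarrow> 'b::real_normed_vector) \<Rightarrow> bool" where
  "Ck_on 0 U f = continuous_on U f"
| "Ck_on (Suc k) U f =
     (f differentiable_on U \<and> (\<forall>v. Ck_on k U (\<lambda>x. frechet_derivative f (at x) v)))"

definition Cinf_on :: "'a::euclidean_space set \<Rightarrow> ('a \<Rightarrow> 'b::real_normed_vector) \<Rightarrow> bool" where
  "Cinf_on U f \<longleftrightarrow> (\<forall>k. Ck_on k U f)"

definition grad :: "(real^'n \<Rightarrow> real) \<Rightarrow> real^'n \<Rightarrow> real^'n" where
  "grad f x = (\<chi> i. frechet_derivative f (at x) (axis i 1))"

definition hess :: "(real^'n \<Rightarrow> real) \<Rightarrow> real^'n \<Rightarrow> real^'n^'n" where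
  "hess f x = (\<chi> i j. frechet_derivative (\<lambda>y. frechet_derivative f (at y) (axis j 1)) (at x) (axis i 1))"

definition sym_mat :: "real^'n^'n \<Rightarrow> bool" where
  "sym_mat M \<longleftrightarrow> transpose M = M"

definition posdef :: "real^'n^'n \<Rightarrow> bool" where
  "posdef A \<longleftrightarrow> (\<forall>\<xi>. \<xi> \<noteq> 0 \<longrightarrow> \<xi> \<bullet> (A *v \<xi>) > 0)"

definition symm_part :: "real^'n^'n \<Rightarrow> real^'n^'n" where
  "symm_part M = (1/2) *\<^sub>R (M + transpose M)"

definition Emat :: "'n \<Rightarrow> 'n \<Rightarrow> real^'n^'n" where
  "Emat i j = (\<chi> k l. if k = i \<and> l = j then 1 else 0)"

text \<open>F is defined on Sym(n) x R^n; we model it as a function on all matrices of which only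
  the values on symmetric matrices matter, and differentiate the extension
  (M,p) |-> F(sym M, p).  The matrix F^{ij} = dF/dM_{ij} (symmetric convention).\<close>
definition Fext :: "(real^'n^'n \<Rightarrow> real^'n \<Rightarrow> real) \<Rightarrow> (real^'n^'n) \<times> (real^'n) \<Rightarrow> real" where
  "Fext F z = F (symm_part (fst z)) (snd z)"

definition Fder :: "(real^'n^'n \<Rightarrow> real^'n \<Rightarrow> real) \<Rightarrow> real^'n^'n \<Rightarrow> real^'n \<Rightarrow> real^'n^'n" where
  "Fder F M p = (\<chi> i j. frechet_derivative (Fext F) (at (M, p)) (Emat i j, 0))"

definition lipschitz_Sym :: "(real^'n^'n \<Rightarrow> real^'n \<Rightarrow> real) \<Rightarrow> bool" where
  "lipschitz_Sym F \<longleftrightarrow> (\<exists>C. lipschitz_on C ({M. sym_mat M} \<times> UNIV) (\<lambda>z. F (fst z) (snd z)))"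

definition degenerate_elliptic :: "(real^'n^'n \<Rightarrow> real^'n \<Rightarrow> real) \<Rightarrow> bool" where
  "degenerate_elliptic F \<longleftrightarrow>
     (\<forall>M P p. sym_mat M \<and> sym_mat P \<and> posdef P \<longrightarrow> F (M + P) p \<ge> F M p)"

definition smooth_solution :: "(real^'n^'n \<Rightarrow> real^'n \<Rightarrow> real) \<Rightarrow> (real^'n) set \<Rightarrow> (real^'n \<Rightarrow> real) \<Rightarrow> bool" where
  "smooth_solution F \<Omega> u \<longleftrightarrow> Cinf_on \<Omega> u \<and> (\<forall>x\<in>\<Omega>. F (hess u x) (grad u x) = 0)"

definition smooth_strictly_elliptic_along_solutions :: "(real^'n^'n \<Rightarrow> real^'n \<Rightarrow> real) \<Rightarrow> bool" where
  "smooth_strictly_elliptic_along_solutions F \<longleftrightarrow>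
     (\<forall>\<Omega> u. open \<Omega> \<and> smooth_solution F \<Omega> u \<longrightarrow>
        (\<forall>x\<in>\<Omega>. (\<exists>W. open W \<and> (hess u x, grad u x) \<in> W \<and> Cinf_on W (Fext F))
               \<and> posdef (Fder F (hess u x) (grad u x))))"

definition jacobi_visc :: "(real^'n \<Rightarrow> real^'n^'n) \<Rightarrow> (real^'n \<Rightarrow> real) \<Rightarrow> (real^'n) set \<Rightarrow> bool" where
  "jacobi_visc A bx \<Omega> \<longleftrightarrow>
     (\<forall>x0\<in>\<Omega>. \<forall>N \<phi>. open N \<and> x0 \<in> N \<and> N \<subseteq> \<Omega> \<and> Ck_on 2 N \<phi> \<and>
        (\<forall>x\<in>N. bx x \<le> \<phi> x) \<and> \<phi> x0 = bx x0 \<longrightarrow>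
        (\<Sum>i\<in>UNIV. \<Sum>j\<in>UNIV. A x0 $ i $ j * hess \<phi> x0 $ i $ j)
          \<ge> 2 * (\<Sum>i\<in>UNIV. \<Sum>j\<in>UNIV. A x0 $ i $ j * grad \<phi> x0 $ i * grad \<phi> x0 $ j) / bx x0)"

definition has_jacobi_inequality ::
  "(real^'n^'n \<Rightarrow> real^'n \<Rightarrow> real) \<Rightarrow> (real^'n^'n \<Rightarrow> real^'n \<Rightarrow> real) \<Rightarrow> bool" where
  "has_jacobi_inequality F b \<longleftrightarrow>
     lipschitz_Sym b \<and> (\<forall>M p. sym_mat M \<longrightarrow> b M p > 0) \<and>
     (\<forall>\<Omega> u. open \<Omega> \<and> smooth_solution F \<Omega> u \<longrightarrow>
        jacobi_visc (\<lambda>x. Fder F (hess u x) (grad u x)) (\<lambda>x. b (hess u x) (grad u x)) \<Omega>)"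

end

theory Submission
  imports Defs
begin

text \<open>Suppose \<open>w = \<eta>(x\<^sub>k) b\<close> attains its maximum \<open>M\<close> over the compact box at an
  interior point \<open>x\<^sub>0\<close>. With \<open>s = x\<^sub>k - lo\<^sub>k\<close> and \<open>D = hi\<^sub>k - lo\<^sub>k\<close> one has
  \<open>\<eta> = s/(D(D - s))\<close>, so near \<open>x\<^sub>0\<close> the function \<open>b\<close> is touched from above by
  \<open>\<psi>(s) = MD(D - s)/s\<close>, and hence by a quadratic in \<open>x\<^sub>k\<close> only slightly more convex than the
  Taylor polynomial of \<open>\<psi>\<close>. Since \<open>1/\<psi>\<close> is strictly convex, \<open>\<psi>\<psi>'' < 2\<psi>'\<^sup>2\<close>, and for this
  quadratic the viscosity Jacobi inequality \<open>F\<^sup>i\<^sup>j\<phi>\<^sub>i\<^sub>j \<ge> 2F\<^sup>i\<^sup>j\<phi>\<^sub>i\<phi>\<^sub>j/\<phi>\<close> reduces, by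
  \<open>F\<^sup>k\<^sup>k > 0\<close>, to the opposite inequality. So the maximum lies on the boundary. There \<open>\<eta> = 0\<close>
  on the face \<open>x\<^sub>k = lo\<^sub>k\<close> and \<open>\<eta> \<le> 1/r\<close> everywhere, giving the bound by \<open>sup\<^sub>R b / r\<close>.\<close>

section \<open>Symmetry of second derivatives\<close>

lemma has_real_derivative_along_line:
  fixes f :: "'a::real_normed_vector \<Rightarrow> real"
  assumes "(f has_derivative f') (at (x + s *\<^sub>R a))"
  shows "((\<lambda>s. f (x + s *\<^sub>R a)) has_real_derivative f' a) (at s)"
proof -
  have "((\<lambda>s. x + s *\<^sub>R a) has_derivative (\<lambda>t. t *\<^sub>R a)) (at s)"
    by (auto intro!: derivative_eq_intros)
  from has_derivative_compose[OF this assms]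
  have "((\<lambda>s. f (x + s *\<^sub>R a)) has_derivative (\<lambda>t. f' (t *\<^sub>R a))) (at s)"
    by (simp add: o_def)
  moreover have "(\<lambda>t. f' (t *\<^sub>R a)) = (*) (f' a)"
    using has_derivative_linear[OF assms] by (auto simp: linear_scale fun_eq_iff)
  ultimately show ?thesis by (simp add: has_field_derivative_def)
qed

lemma mixed_difference_mean_value:
  fixes u :: "'a::real_normed_vector \<Rightarrow> real"
  assumes sub: "ball x d \<subseteq> U" and h: "h > 0" "h * (norm a + norm b) < d"
    and du: "\<And>y. y \<in> U \<Longrightarrow> (u has_derivative Du y) (at y)"
    and dD: "\<And>y v. y \<in> U \<Longrightarrow> ((\<lambda>y. Du y v) has_derivative DD y v) (at y)"
  shows "\<exists>p. dist p x < d \<and>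
           u (x + h *\<^sub>R a + h *\<^sub>R b) - u (x + h *\<^sub>R a) - u (x + h *\<^sub>R b) + u x = h\<^sup>2 * DD p a b"
proof -
  have near: "dist (x + s *\<^sub>R a + t *\<^sub>R b) x < d"
    if "0 \<le> s" "s \<le> h" "0 \<le> t" "t \<le> h" for s t
  proof -
    have "norm (s *\<^sub>R a + t *\<^sub>R b) \<le> s * norm a + t * norm b"
      using that norm_triangle_ineq[of "s *\<^sub>R a" "t *\<^sub>R b"] by simp
    also have "\<dots> \<le> h * norm a + h * norm b"
      using that by (intro add_mono mult_right_mono) auto
    finally show ?thesis using h by (simp add: dist_norm add.assoc algebra_simps)
  qed
  have inU: "x + s *\<^sub>R a + t *\<^sub>R b \<in> U" if "0 \<le> s" "s \<le> h" "0 \<le> t" "t \<le> h" for s t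
    using near[OF that] sub by (auto simp: dist_commute)
  define g where "g s = u (x + s *\<^sub>R a + h *\<^sub>R b) - u (x + s *\<^sub>R a)" for s
  have "DERIV g s :> Du (x + s *\<^sub>R a + h *\<^sub>R b) a - Du (x + s *\<^sub>R a) a"
    if "0 \<le> s" "s \<le> h" for s
  proof -
    have shift: "x + s *\<^sub>R a + h *\<^sub>R b = (x + h *\<^sub>R b) + s *\<^sub>R a" for s
      by (simp add: algebra_simps)
    have "((\<lambda>s. u ((x + h *\<^sub>R b) + s *\<^sub>R a)) has_real_derivative Du (x + s *\<^sub>R a + h *\<^sub>R b) a) (at s)"
      using has_real_derivative_along_line du[OF inU[OF that, of h]] h by (simp add: shift)
    moreover have "((\<lambda>s. u (x + s *\<^sub>R a)) has_real_derivative Du (x + s *\<^sub>R a) a) (at s)"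
      using has_real_derivative_along_line du[OF inU[OF that, of 0]] h by simp
    ultimately show ?thesis
      unfolding g_def shift by (rule DERIV_diff)
  qed
  from MVT2[OF h(1), of g, OF this]
  obtain s where s: "0 < s" "s < h"
    "g h - g 0 = h * (Du (x + s *\<^sub>R a + h *\<^sub>R b) a - Du (x + s *\<^sub>R a) a)" by auto
  define k where "k t = Du (x + s *\<^sub>R a + t *\<^sub>R b) a" for t
  have "DERIV k t :> DD (x + s *\<^sub>R a + t *\<^sub>R b) a b" if "0 \<le> t" "t \<le> h" for t
    unfolding k_def using s that
    by (intro has_real_derivative_along_line[of "\<lambda>y. Du y a" _ "x + s *\<^sub>R a", simplified] dD inU)
      auto
  from MVT2[OF h(1), of k, OF this]
  obtain t where t: "0 < t" "t < h" "k h - k 0 = h * DD (x + s *\<^sub>R a + t *\<^sub>R b) a b" by auto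
  have "u (x + h *\<^sub>R a + h *\<^sub>R b) - u (x + h *\<^sub>R a) - u (x + h *\<^sub>R b) + u x = g h - g 0"
    unfolding g_def by simp
  also have "\<dots> = h * (k h - k 0)" using s(3) unfolding k_def by simp
  also have "\<dots> = h\<^sup>2 * DD (x + s *\<^sub>R a + t *\<^sub>R b) a b" using t(3) by (simp add: power2_eq_square)
  finally show ?thesis using near[of s t] s t by auto
qed

text \<open>Both orders of the mixed difference quotient agree, and by the mean value
  theorem they are \<open>DD p a b\<close> and \<open>DD q b a\<close> at points \<open>p, q\<close> arbitrarily close to \<open>x\<close>.\<close>
lemma second_derivative_symmetric:
  fixes u :: "'a::real_normed_vector \<Rightarrow> real"
  assumes U: "open U" "x \<in> U"
    and du: "\<And>y. y \<in> U \<Longrightarrow> (u has_derivative Du y) (at y)"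
    and dD: "\<And>y v. y \<in> U \<Longrightarrow> ((\<lambda>y. Du y v) has_derivative DD y v) (at y)"
    and cont: "\<And>v w. continuous_on U (\<lambda>y. DD y v w)"
  shows "DD x a b = DD x b a"
proof (rule ccontr)
  assume ne: "DD x a b \<noteq> DD x b a"
  define e where "e = \<bar>DD x a b - DD x b a\<bar> / 2"
  have e: "e > 0" using ne unfolding e_def by simp
  have ct: "continuous (at x) (\<lambda>y. DD y v w)" for v w
    using cont[of v w] U by (simp add: continuous_on_eq_continuous_at)
  obtain d1 where d1: "d1 > 0" "\<And>y. dist y x < d1 \<Longrightarrow> dist (DD y a b) (DD x a b) < e"
    using ct[of a b] e unfolding continuous_at_eps_delta by blast
  obtain d2 where d2: "d2 > 0" "\<And>y. dist y x < d2 \<Longrightarrow> dist (DD y b a) (DD x b a) < e"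
    using ct[of b a] e unfolding continuous_at_eps_delta by blast
  obtain d0 where d0: "d0 > 0" "ball x d0 \<subseteq> U" using U open_contains_ball by blast
  define d where "d = min d0 (min d1 d2)"
  have d: "d > 0" "ball x d \<subseteq> U" using d0 d1 d2 unfolding d_def by auto
  define h where "h = d / (2 * (norm a + norm b + 1))"
  have nab: "norm a + norm b + 1 > 0" by (simp add: add_nonneg_pos)
  have h: "h > 0" unfolding h_def using d nab by simp
  have "h * (norm a + norm b) \<le> h * (norm a + norm b + 1)" using h by simp
  also have "\<dots> = d / 2" unfolding h_def using nab by (simp add: field_simps)
  finally have hab: "h * (norm a + norm b) < d" using d by simp
  then have hba: "h * (norm b + norm a) < d" by (simp add: add.commute)
  obtain p where p: "dist p x < d"
    "u (x + h *\<^sub>R a + h *\<^sub>R b) - u (x + h *\<^sub>R a) - u (x + h *\<^sub>R b) + u x = h\<^sup>2 * DD p a b"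
    using mixed_difference_mean_value[OF d(2) h hab du dD] by blast
  obtain q where q: "dist q x < d"
    "u (x + h *\<^sub>R b + h *\<^sub>R a) - u (x + h *\<^sub>R b) - u (x + h *\<^sub>R a) + u x = h\<^sup>2 * DD q b a"
    using mixed_difference_mean_value[OF d(2) h hba du dD] by blast
  have "x + h *\<^sub>R b + h *\<^sub>R a = x + h *\<^sub>R a + h *\<^sub>R b" by (simp add: algebra_simps)
  with p(2) q(2) have "h\<^sup>2 * DD p a b = h\<^sup>2 * DD q b a" by (simp add: algebra_simps)
  then have "DD p a b = DD q b a" using h by simp
  moreover have "dist (DD p a b) (DD x a b) < e" using d1 p(1) unfolding d_def by simp
  moreover have "dist (DD q b a) (DD x b a) < e" using d2 q(1) unfolding d_def by simp
  ultimately show False unfolding e_def dist_real_def by (simp add: abs_if split: if_splits)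
qed

lemma Ck_on_subset: "Ck_on k U f \<Longrightarrow> S \<subseteq> U \<Longrightarrow> Ck_on k S f"
  by (induction k arbitrary: f) (auto intro: continuous_on_subset differentiable_on_subset)

lemma Ck_on_2_iff: "Ck_on 2 U f \<longleftrightarrow> f differentiable_on U \<and>
   (\<forall>v. (\<lambda>x. frechet_derivative f (at x) v) differentiable_on U \<and>
      (\<forall>w. continuous_on U (\<lambda>x. frechet_derivative (\<lambda>y. frechet_derivative f (at y) v) (at x) w)))"
  by (simp add: numeral_2_eq_2)

lemma Ck_on_2_derivatives:
  fixes u :: "'a::euclidean_space \<Rightarrow> real"
  assumes "open U" and "Ck_on 2 U u"
  shows "\<And>y. y \<in> U \<Longrightarrow> (u has_derivative frechet_derivative u (at y)) (at y)"
    and "\<And>y v. y \<in> U \<Longrightarrow> ((\<lambda>y. frechet_derivative u (at y) v) has_derivative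
            frechet_derivative (\<lambda>y. frechet_derivative u (at y) v) (at y)) (at y)"
    and "\<And>v w. continuous_on U (\<lambda>x. frechet_derivative (\<lambda>y. frechet_derivative u (at y) v) (at x) w)"
    and "\<And>v. continuous_on U (\<lambda>x. frechet_derivative u (at x) v)"
  using assms unfolding Ck_on_2_iff
  by (auto simp: differentiable_on_eq_differentiable_at frechet_derivative_works[symmetric]
      intro: differentiable_imp_continuous_on)

lemma sym_mat_hess:
  fixes u :: "real^'n \<Rightarrow> real"
  assumes U: "open U" and C: "Ck_on 2 U u" and x: "x \<in> U"
  shows "sym_mat (hess u x)"
  using second_derivative_symmetric[OF U x Ck_on_2_derivatives(1-3)[OF U C]] C
  unfolding sym_mat_def hess_def transpose_def by (simp add: vec_eq_iff)

lemma continuous_on_hess_grad: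
  fixes u :: "real^'n \<Rightarrow> real"
  assumes U: "open U" and C: "Ck_on 2 U u"
  shows "continuous_on U (\<lambda>x. (hess u x, grad u x))"
  unfolding hess_def grad_def
  by (intro continuous_on_Pair continuous_on_vec_lambda Ck_on_2_derivatives(3,4)[OF U C])

lemma continuous_on_lipschitz_Sym_hess_grad:
  fixes u :: "real^'n \<Rightarrow> real"
  assumes U: "open U" and C: "Ck_on 2 U u" and b: "lipschitz_Sym b"
  shows "continuous_on U (\<lambda>x. b (hess u x) (grad u x))"
proof -
  obtain L where "lipschitz_on L ({M. sym_mat M} \<times> UNIV) (\<lambda>z. b (fst z) (snd z))"
    using b unfolding lipschitz_Sym_def by blast
  then have "continuous_on ({M. sym_mat M} \<times> UNIV) (\<lambda>z. b (fst z) (snd z))"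
    by (rule lipschitz_on_continuous_on)
  from continuous_on_compose2[OF this continuous_on_hess_grad[OF U C]]
  show ?thesis using sym_mat_hess[OF U C] by auto
qed

lemma jacobi_inequality_along_solution:
  fixes F b :: "real^'n^'n \<Rightarrow> real^'n \<Rightarrow> real" and u :: "real^'n \<Rightarrow> real"
  assumes F_smooth: "smooth_strictly_elliptic_along_solutions F" and jac: "has_jacobi_inequality F b"
    and U: "open U" "Cinf_on U u" and \<Omega>: "open \<Omega>" "\<Omega> \<subseteq> U"
    and sol: "\<forall>x\<in>\<Omega>. F (hess u x) (grad u x) = 0"
  shows "continuous_on U (\<lambda>x. b (hess u x) (grad u x))"
    and "\<And>x. x \<in> U \<Longrightarrow> b (hess u x) (grad u x) > 0"
    and "jacobi_visc (\<lambda>x. Fder F (hess u x) (grad u x)) (\<lambda>x. b (hess u x) (grad u x)) \<Omega>"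
    and "\<And>x. x \<in> \<Omega> \<Longrightarrow> posdef (Fder F (hess u x) (grad u x))"
proof -
  have C2: "Ck_on 2 U u" using U(2) unfolding Cinf_on_def by blast
  have "smooth_solution F \<Omega> u"
    using U \<Omega> sol Ck_on_subset unfolding smooth_solution_def Cinf_on_def by blast
  then show "jacobi_visc (\<lambda>x. Fder F (hess u x) (grad u x)) (\<lambda>x. b (hess u x) (grad u x)) \<Omega>"
    and "\<And>x. x \<in> \<Omega> \<Longrightarrow> posdef (Fder F (hess u x) (grad u x))"
    using jac F_smooth \<Omega>(1)
    unfolding has_jacobi_inequality_def smooth_strictly_elliptic_along_solutions_def by blast+
  show "continuous_on U (\<lambda>x. b (hess u x) (grad u x))"
    using jac U(1) C2 continuous_on_lipschitz_Sym_hess_grad unfolding has_jacobi_inequality_def by blast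
  show "\<And>x. x \<in> U \<Longrightarrow> b (hess u x) (grad u x) > 0"
    using jac sym_mat_hess[OF U(1) C2] unfolding has_jacobi_inequality_def by blast
qed

section \<open>Quadratic test functions in one coordinate\<close>

lemma has_derivative_coordinate_quadratic:
  "((\<lambda>x::real^'n::finite. al + be * (x $ k - t) + ga * (x $ k - t)\<^sup>2) has_derivative
     (\<lambda>h. (be + 2 * ga * (x $ k - t)) * h $ k)) (at x)"
  "((\<lambda>x::real^'n::finite. (be + 2 * ga * (x $ k - t)) * v $ k) has_derivative
     (\<lambda>h. 2 * ga * v $ k * h $ k)) (at x)"
  using bounded_linear_vec_nth[of k]
  by (auto intro!: derivative_eq_intros bounded_linear_imp_has_derivative
      simp: fun_eq_iff algebra_simps power2_eq_square)

lemma Ck_on_grad_hess_coordinate_quadratic: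
  fixes k :: "'n::finite" and al be ga t :: real
  defines "\<phi> \<equiv> \<lambda>x::real^'n::finite. al + be * (x $ k - t) + ga * (x $ k - t)\<^sup>2"
  shows "Ck_on 2 N \<phi>"
    and "grad \<phi> x = (\<chi> i. if i = k then be + 2 * ga * (x $ k - t) else 0)"
    and "hess \<phi> x = (\<chi> i j. if i = k \<and> j = k then 2 * ga else 0)"
proof -
  note d = has_derivative_coordinate_quadratic
  have D1: "(\<lambda>y. frechet_derivative \<phi> (at y) v) = (\<lambda>y. (be + 2 * ga * (y $ k - t)) * v $ k)" for v
    unfolding \<phi>_def by (simp flip: frechet_derivative_at[OF d(1)])
  have D2: "frechet_derivative (\<lambda>y. frechet_derivative \<phi> (at y) v) (at y) = (\<lambda>h. 2 * ga * v $ k * h $ k)"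
    for v y
    unfolding D1 by (rule frechet_derivative_at[OF d(2), symmetric])
  show "Ck_on 2 N \<phi>"
    unfolding Ck_on_2_iff D2 unfolding D1
  proof (intro conjI allI)
    show "\<phi> differentiable_on N"
      unfolding \<phi>_def differentiable_on_def differentiable_def
      using has_derivative_at_withinI[OF d(1)] by blast
    show "(\<lambda>y. (be + 2 * ga * (y $ k - t)) * v $ k) differentiable_on N" for v
      unfolding differentiable_on_def differentiable_def
      using has_derivative_at_withinI[OF d(2)] by blast
  qed (intro continuous_intros)
  show "grad \<phi> x = (\<chi> i. if i = k then be + 2 * ga * (x $ k - t) else 0)"
    unfolding grad_def using D1 by (simp add: vec_eq_iff axis_def fun_eq_iff)
  show "hess \<phi> x = (\<chi> i j. if i = k \<and> j = k then 2 * ga else 0)"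
    unfolding hess_def D2 by (simp add: vec_eq_iff axis_def)
qed

lemma posdef_diag_pos:
  assumes "posdef A"
  shows "A $ k $ k > 0"
proof -
  have "axis k 1 \<bullet> (A *v axis k (1::real)) > 0"
    using assms unfolding posdef_def by (metis axis_nth zero_neq_one zero_index)
  then show ?thesis by (simp add: inner_axis' matrix_vector_mult_basis column_def)
qed

lemma sum_sum_if_eq_eq:
  fixes f :: "'n::finite \<Rightarrow> 'n \<Rightarrow> 'a::comm_monoid_add"
  shows "(\<Sum>i\<in>UNIV. \<Sum>j\<in>UNIV. if i = k \<and> j = k then f i j else 0) = f k k"
proof -
  have "(\<Sum>j\<in>UNIV. if i = k \<and> j = k then f i j else 0) = (if i = k then f k k else 0)" for i
    by (cases "i = k") simp_all
  then show ?thesis by simp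
qed

lemma jacobi_visc_touching_coordinate_quadratic:
  fixes A :: "real^'n \<Rightarrow> real^'n^'n"
  assumes jac: "jacobi_visc A bx \<Omega>" and N: "open N" "x0 \<in> N" "N \<subseteq> \<Omega>"
    and A: "posdef (A x0)" and pos: "bx x0 > 0"
    and touch: "\<And>x. x \<in> N \<Longrightarrow> bx x \<le> bx x0 + be * (x $ k - x0 $ k) + ga * (x $ k - x0 $ k)\<^sup>2"
  shows "be\<^sup>2 \<le> ga * bx x0"
proof -
  define \<phi> where "\<phi> = (\<lambda>x::real^'n. bx x0 + be * (x $ k - x0 $ k) + ga * (x $ k - x0 $ k)\<^sup>2)"
  note \<phi> = Ck_on_grad_hess_coordinate_quadratic
    [where al = "bx x0" and be = be and ga = ga and k = k and t = "x0 $ k", folded \<phi>_def]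
  have "(\<Sum>i\<in>UNIV. \<Sum>j\<in>UNIV. A x0 $ i $ j * hess \<phi> x0 $ i $ j)
          \<ge> 2 * (\<Sum>i\<in>UNIV. \<Sum>j\<in>UNIV. A x0 $ i $ j * grad \<phi> x0 $ i * grad \<phi> x0 $ j) / bx x0"
  proof (rule jac[unfolded jacobi_visc_def, rule_format])
    show "x0 \<in> \<Omega>" using N by blast
    show "open N \<and> x0 \<in> N \<and> N \<subseteq> \<Omega> \<and> Ck_on 2 N \<phi> \<and> (\<forall>x\<in>N. bx x \<le> \<phi> x) \<and> \<phi> x0 = bx x0"
      using N \<phi>(1) touch unfolding \<phi>_def by simp
  qed
  moreover have "grad \<phi> x0 = (\<chi> i. if i = k then be else 0)" unfolding \<phi>(2) by (simp add: vec_eq_iff)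
  ultimately have "A x0 $ k $ k * (2 * ga) \<ge> 2 * (A x0 $ k $ k * be\<^sup>2) / bx x0"
    unfolding \<phi>(3)
    by (simp add: if_distrib[of "\<lambda>c. _ * c"] if_distrib[of "\<lambda>c. c * _"] sum_sum_if_eq_eq
        power2_eq_square mult.assoc cong: if_cong)
  then show ?thesis
    using posdef_diag_pos[OF A, of k] pos by (simp add: field_simps)
qed

section \<open>The weighted maximum principle\<close>

text \<open>The second-order Taylor polynomial of \<open>\<psi>(s) = c (D - s)/s\<close> at \<open>s0\<close>, with the curvature
  \<open>\<psi>''(s0)/2 = cD/s0\<^sup>3\<close> enlarged by \<open>c/(2 s0\<^sup>2)\<close>: it lies above \<open>\<psi>\<close> for \<open>s \<ge> 2Ds0/(2D + s0)\<close>, while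
  still violating \<open>\<psi>\<psi>'' \<ge> 2\<psi>'\<^sup>2\<close> at \<open>s0\<close>.\<close>
lemma reciprocal_quadratic_majorant:
  fixes c D s0 s :: real
  assumes "0 < s0" "s0 < D" "0 < c" "0 < s" "2 * D * s0 \<le> (2 * D + s0) * s"
  shows "c * (D - s) / s
    \<le> c * (D - s0) / s0 - c * D / s0\<^sup>2 * (s - s0) + (2 * D + s0) * c / (2 * s0 ^ 3) * (s - s0)\<^sup>2"
proof -
  have "c * (D - s0) / s0 - c * D / s0\<^sup>2 * (s - s0) + (2 * D + s0) * c / (2 * s0 ^ 3) * (s - s0)\<^sup>2
          - c * (D - s) / s
        = c * (s - s0)\<^sup>2 * ((2 * D + s0) * s - 2 * D * s0) / (2 * s0 ^ 3 * s)"
    using assms by (simp add: field_simps power2_eq_square power3_eq_cube)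
  also have "\<dots> \<ge> 0" using assms by (intro divide_nonneg_pos mult_nonneg_nonneg) auto
  finally show ?thesis by simp
qed

lemma reciprocal_quadratic_majorant_curvature:
  fixes c D s0 :: real
  assumes "0 < s0" "s0 < D" "0 < c"
  shows "(2 * D + s0) * c / (2 * s0 ^ 3) * (c * (D - s0) / s0) < (c * D / s0\<^sup>2)\<^sup>2"
proof -
  have "(2 * D + s0) * c / (2 * s0 ^ 3) * (c * (D - s0) / s0) = (c / s0\<^sup>2)\<^sup>2 * ((2 * D + s0) * (D - s0) / 2)"
    using assms by (simp add: field_simps power2_eq_square power3_eq_cube)
  also have "\<dots> < (c / s0\<^sup>2)\<^sup>2 * D\<^sup>2"
    using assms by (intro mult_strict_left_mono)
      (auto simp: algebra_simps power2_eq_square intro!: add_pos_pos mult_pos_pos)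
  also have "\<dots> = (c * D / s0\<^sup>2)\<^sup>2" by (simp add: power_mult_distrib power_divide)
  finally show ?thesis .
qed

lemma interior_component_bounds:
  fixes S :: "(real^'n) set"
  assumes "x \<in> interior S"
  shows "(\<And>y. y \<in> S \<Longrightarrow> y $ k \<le> c) \<Longrightarrow> x $ k < c"
    and "(\<And>y. y \<in> S \<Longrightarrow> c \<le> y $ k) \<Longrightarrow> c < x $ k"
proof -
  obtain e where e: "e > 0" "ball x e \<subseteq> S" using assms mem_interior by blast
  have "x + t *\<^sub>R axis k 1 \<in> S" if "\<bar>t\<bar> = e / 2" for t
    using e that by (intro subsetD[OF e(2)]) (simp add: dist_norm norm_axis_1)
  from this[of "e / 2"] this[of "- e / 2"] e(1)
  show "(\<And>y. y \<in> S \<Longrightarrow> y $ k \<le> c) \<Longrightarrow> x $ k < c"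
    and "(\<And>y. y \<in> S \<Longrightarrow> c \<le> y $ k) \<Longrightarrow> c < x $ k"
    by force+
qed

text \<open>With \<open>s = x\<^sub>k - lo\<close> and \<open>D = hi - lo\<close> the weight is \<open>s/(D(D - s))\<close>, so maximality of the
  weighted value at \<open>x0\<close> says \<open>bx \<le> c(D - s)/s\<close> for \<open>c = D \<cdot> max\<close>, and on the neighbourhood \<open>N\<close>
  the quadratic majorant above touches \<open>bx\<close> from above at \<open>x0\<close>.\<close>
lemma jacobi_visc_no_interior_weighted_max:
  fixes A :: "real^'n \<Rightarrow> real^'n^'n"
  assumes K: "K \<subseteq> \<Omega>" "\<And>x. x \<in> K \<Longrightarrow> lo \<le> x $ k \<and> x $ k < hi"
    and jac: "jacobi_visc A bx \<Omega>" and x0: "x0 \<in> interior K"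
    and A: "posdef (A x0)" and pos: "bx x0 > 0"
    and max: "\<And>x. x \<in> K \<Longrightarrow>
      (1 / (hi - x $ k) - 1 / (hi - lo)) * bx x \<le> (1 / (hi - x0 $ k) - 1 / (hi - lo)) * bx x0"
  shows False
proof -
  define D where "D = hi - lo"
  define s0 where "s0 = x0 $ k - lo"
  have x0K: "x0 \<in> K" using x0 interior_subset by blast
  have "lo < x0 $ k" using interior_component_bounds(2)[OF x0] K(2) by blast
  then have s0: "0 < s0" "s0 < D" using K(2)[OF x0K] unfolding s0_def D_def by auto
  have \<eta>: "1 / (hi - x $ k) - 1 / (hi - lo) = (x $ k - lo) / (D * (D - (x $ k - lo)))"
    if "x \<in> K" for x
    using K(2)[OF that] s0 unfolding D_def by (simp add: field_simps)
  define c where "c = s0 / (D - s0) * bx x0"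
  have c: "c > 0" using s0 pos unfolding c_def by simp
  have bx0: "bx x0 = c * (D - s0) / s0" unfolding c_def using s0 by (simp add: field_simps)
  have max': "(x $ k - lo) / (D - (x $ k - lo)) * bx x \<le> c" if "x \<in> K" for x
  proof -
    have "(x $ k - lo) / (D * (D - (x $ k - lo))) * bx x \<le> s0 / (D * (D - s0)) * bx x0"
      using max[OF that] unfolding \<eta>[OF that] \<eta>[OF x0K] s0_def .
    then have "D * ((x $ k - lo) / (D * (D - (x $ k - lo))) * bx x) \<le> D * (s0 / (D * (D - s0)) * bx x0)"
      using s0 by (intro mult_left_mono) auto
    then show ?thesis using s0 unfolding c_def by simp
  qed
  define N where "N = interior K \<inter> {x. 2 * D * s0 < (2 * D + s0) * (x $ k - lo)}"
  have "open N" unfolding N_def by (intro open_Int open_interior open_Collect_less continuous_intros)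
  moreover have "2 * D * s0 < (2 * D + s0) * s0" using s0 by (simp add: algebra_simps)
  then have "x0 \<in> N" using x0 unfolding N_def s0_def by simp
  moreover have "N \<subseteq> \<Omega>" using K(1) interior_subset unfolding N_def by blast
  moreover have "bx x \<le> bx x0 + (- (c * D / s0\<^sup>2)) * (x $ k - x0 $ k)
                   + (2 * D + s0) * c / (2 * s0 ^ 3) * (x $ k - x0 $ k)\<^sup>2"
    if x: "x \<in> N" for x
  proof -
    define s where "s = x $ k - lo"
    have xK: "x \<in> K" using x interior_subset unfolding N_def by blast
    have sN: "2 * D * s0 < (2 * D + s0) * s" using x unfolding N_def s_def by simp
    have s: "0 < s" "s < D"
    proof -
      have "0 < 2 * D * s0" using s0 by simp
      then have "0 < (2 * D + s0) * s" using sN by linarith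
      then show "0 < s" using s0 by (simp add: zero_less_mult_iff)
      show "s < D" using K(2)[OF xK] unfolding s_def D_def by simp
    qed
    have "s / (D - s) * bx x \<le> c" using max'[OF xK] unfolding s_def .
    then have "bx x \<le> c * (D - s) / s" using s by (simp add: field_simps)
    also have "\<dots> \<le> c * (D - s0) / s0 - c * D / s0\<^sup>2 * (s - s0)
                   + (2 * D + s0) * c / (2 * s0 ^ 3) * (s - s0)\<^sup>2"
      using reciprocal_quadratic_majorant[OF s0 c s(1)] sN by simp
    finally show ?thesis unfolding bx0 s_def s0_def by simp
  qed
  ultimately have "(- (c * D / s0\<^sup>2))\<^sup>2 \<le> (2 * D + s0) * c / (2 * s0 ^ 3) * bx x0"
    by (rule jacobi_visc_touching_coordinate_quadratic[OF jac _ _ _ A pos])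
  with reciprocal_quadratic_majorant_curvature[OF s0 c] show False
    unfolding bx0 by simp
qed

lemma jacobi_visc_weighted_SUP_frontier:
  fixes A :: "real^'n \<Rightarrow> real^'n^'n"
  assumes K: "compact K" "K \<noteq> {}" "K \<subseteq> \<Omega>" "\<And>x. x \<in> K \<Longrightarrow> lo \<le> x $ k \<and> x $ k < hi"
    and jac: "jacobi_visc A bx \<Omega>" and A: "\<And>x. x \<in> K \<Longrightarrow> posdef (A x)"
    and bx: "continuous_on K bx" "\<And>x. x \<in> K \<Longrightarrow> bx x > 0"
  shows "(SUP x\<in>K. (1 / (hi - x $ k) - 1 / (hi - lo)) * bx x)
       = (SUP x\<in>frontier K. (1 / (hi - x $ k) - 1 / (hi - lo)) * bx x)"
proof -
  define w where "w x = (1 / (hi - x $ k) - 1 / (hi - lo)) * bx x" for x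
  have "continuous_on K w"
    unfolding w_def using K(4) by (intro continuous_intros bx(1)) force
  then obtain x0 where x0: "x0 \<in> K" "\<And>x. x \<in> K \<Longrightarrow> w x \<le> w x0"
    using continuous_attains_sup[OF K(1,2)] by blast
  have "x0 \<notin> interior K"
    using jacobi_visc_no_interior_weighted_max[OF K(3,4) jac _ A bx(2) x0(2)[unfolded w_def]] x0(1)
    by blast
  then have "x0 \<in> frontier K"
    using x0(1) compact_imp_closed[OF K(1)] by (simp add: frontier_def closure_closed)
  moreover have "frontier K \<subseteq> K" using K(1) by (simp add: compact_imp_closed frontier_subset_closed)
  ultimately have "(SUP x\<in>K. w x) = w x0" "(SUP x\<in>frontier K. w x) = w x0"
    using x0 by (auto intro!: cSup_eq_maximum)
  then show ?thesis unfolding w_def by simp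
qed

lemma weighted_SUP_frontier_le:
  fixes K L :: "(real^'n) set"
  assumes K: "compact K" "\<And>x. x \<in> K \<Longrightarrow> x $ k \<le> hi - r"
    and r: "0 < r" and lo: "lo < hi" and L: "L \<subseteq> {x. x $ k = lo}"
    and R: "frontier K - L \<noteq> {}"
    and bx: "continuous_on K bx" "\<And>x. x \<in> K \<Longrightarrow> bx x > 0"
  shows "(SUP x\<in>frontier K. (1 / (hi - x $ k) - 1 / (hi - lo)) * bx x)
           \<le> 1 / r * (SUP x\<in>frontier K - L. bx x)"
proof -
  have frK: "frontier K \<subseteq> K" using K(1) by (simp add: compact_imp_closed frontier_subset_closed)
  have "bdd_above (bx ` K)"
    using compact_continuous_image[OF bx(1) K(1)] by (simp add: bounded_imp_bdd_above compact_imp_bounded)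
  moreover have "bx ` (frontier K - L) \<subseteq> bx ` K" using frK by blast
  ultimately have bdd: "bdd_above (bx ` (frontier K - L))" by (rule bdd_above_mono)
  have supR: "bx x \<le> (SUP x\<in>frontier K - L. bx x)" if "x \<in> frontier K - L" for x
    using cSUP_upper[OF that bdd] .
  obtain y where y: "y \<in> frontier K - L" using R by blast
  then have sup_pos: "0 < (SUP x\<in>frontier K - L. bx x)" using supR[OF y] bx(2) frK by force
  show ?thesis
  proof (rule cSUP_least)
    show "frontier K \<noteq> {}" using y by blast
    fix x assume x: "x \<in> frontier K"
    then have xK: "x \<in> K" using frK by blast
    show "(1 / (hi - x $ k) - 1 / (hi - lo)) * bx x \<le> 1 / r * (SUP x\<in>frontier K - L. bx x)"
    proof (cases "x \<in> L")
      case True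
      then show ?thesis using L sup_pos r by auto
    next
      case False
      have "1 / (hi - x $ k) \<le> 1 / r" using K(2)[OF xK] r by (simp add: frac_le)
      moreover have "0 < 1 / (hi - lo)" using lo by simp
      ultimately have "1 / (hi - x $ k) - 1 / (hi - lo) \<le> 1 / r" by linarith
      then have "(1 / (hi - x $ k) - 1 / (hi - lo)) * bx x \<le> 1 / r * bx x"
        using bx(2)[OF xK] by (intro mult_right_mono) auto
      also have "\<dots> \<le> 1 / r * (SUP x\<in>frontier K - L. bx x)"
        using supR x False r by (intro mult_left_mono) auto
      finally show ?thesis .
    qed
  qed
qed

lemma truncated_box:
  fixes lo hi :: "real^'n"
  assumes lohi: "\<forall>i. lo $ i < hi $ i" and r: "0 < r" "r < hi $ k - lo $ k"
  defines "B \<equiv> {x. lo $ k \<le> x $ k \<and> x $ k \<le> hi $ k - r \<and>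
                     (\<forall>i. i \<noteq> k \<longrightarrow> lo $ i \<le> x $ i \<and> x $ i \<le> hi $ i)}"
  shows "B \<subseteq> {x. \<forall>i. lo $ i \<le> x $ i \<and> x $ i \<le> hi $ i}"
    and "closed B"
    and "(\<chi> i. if i = k then hi $ k - r else lo $ i) \<in> frontier B"
proof -
  show sub: "B \<subseteq> {x. \<forall>i. lo $ i \<le> x $ i \<and> x $ i \<le> hi $ i}"
  proof (clarify)
    fix x i assume "x \<in> B"
    then show "lo $ i \<le> x $ i \<and> x $ i \<le> hi $ i" unfolding B_def using r by (cases "i = k") auto
  qed
  show closed: "closed B" unfolding B_def
    by (intro closed_Collect_conj closed_Collect_all closed_Collect_imp closed_Collect_le
        continuous_intros) (auto intro: open_Collect_neg)
  define y where "y = (\<chi> i. if i = k then hi $ k - r else lo $ i)"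
  have "y \<in> B" unfolding y_def B_def using r lohi by (auto simp: less_imp_le)
  moreover have "y \<notin> interior B"
  proof
    assume "y \<in> interior B"
    then have "y $ k < hi $ k - r" by (rule interior_component_bounds(1)) (simp add: B_def)
    then show False by (simp add: y_def)
  qed
  ultimately show "(\<chi> i. if i = k then hi $ k - r else lo $ i) \<in> frontier B"
    using closed unfolding y_def frontier_def by (simp add: closure_closed)
qed

theorem mainTheorem5:
  fixes F b :: "real^'n^'n \<Rightarrow> real^'n \<Rightarrow> real"
    and u :: "real^'n \<Rightarrow> real"
    and lo hi :: "real^'n" and k :: 'n and r :: real
  assumes F_lip: "lipschitz_Sym F"
    and F_ell: "degenerate_elliptic F"
    and F_smooth: "smooth_strictly_elliptic_along_solutions F"
    and jac: "has_jacobi_inequality F b"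
    and u_smooth: "\<exists>U. open U \<and> cball 0 1 \<subseteq> U \<and> Cinf_on U u"
    and u_sol: "\<forall>x\<in>ball 0 1. F (hess u x) (grad u x) = 0"
    and lohi: "\<forall>i. lo $ i < hi $ i"
    and box: "{x. \<forall>i. lo $ i \<le> x $ i \<and> x $ i \<le> hi $ i} \<subseteq> ball 0 1"
    and r: "0 < r" "r < hi $ k - lo $ k"
  shows "let B' = {x. lo $ k \<le> x $ k \<and> x $ k \<le> hi $ k - r \<and>
                     (\<forall>i. i \<noteq> k \<longrightarrow> lo $ i \<le> x $ i \<and> x $ i \<le> hi $ i)};
             L0 = rel_interior ({x. x $ k = lo $ k} \<inter> B');
             R = frontier B' - L0;
             bx = (\<lambda>x. b (hess u x) (grad u x));
             \<eta> = (\<lambda>t. 1 / (hi $ k - t) - 1 / (hi $ k - lo $ k))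
         in (SUP x\<in>B'. \<eta> (x $ k) * bx x) = (SUP x\<in>frontier B'. \<eta> (x $ k) * bx x)
          \<and> (SUP x\<in>frontier B'. \<eta> (x $ k) * bx x) \<le> (1 / r) * (SUP x\<in>R. bx x)"
proof -
  obtain U where U: "open U" "Cinf_on U u" "ball 0 1 \<subseteq> U"
    using u_smooth ball_subset_cball by blast
  note sol = jacobi_inequality_along_solution[OF F_smooth jac U(1,2) open_ball U(3) u_sol]
  define bx where "bx = (\<lambda>x. b (hess u x) (grad u x))"
  define B' where "B' = {x. lo $ k \<le> x $ k \<and> x $ k \<le> hi $ k - r \<and>
                     (\<forall>i. i \<noteq> k \<longrightarrow> lo $ i \<le> x $ i \<and> x $ i \<le> hi $ i)}"
  define L0 where "L0 = rel_interior ({x. x $ k = lo $ k} \<inter> B')"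
  note B' = truncated_box[OF lohi r, folded B'_def]
  have B'ball: "B' \<subseteq> ball 0 1" using B'(1) box by blast
  have compact: "compact B'" using B'(2) B'ball bounded_subset compact_eq_bounded_closed by blast
  have B'k: "lo $ k \<le> x $ k \<and> x $ k \<le> hi $ k - r" if "x \<in> B'" for x using that unfolding B'_def by simp
  have L0: "L0 \<subseteq> {x. x $ k = lo $ k}" unfolding L0_def using rel_interior_subset by blast
  have R: "frontier B' - L0 \<noteq> {}" using B'(3) L0 r by force
  have bx: "continuous_on B' bx" "\<And>x. x \<in> B' \<Longrightarrow> bx x > 0"
    using continuous_on_subset[OF sol(1)] sol(2) B'ball U(3) unfolding bx_def by blast+
  have "(SUP x\<in>B'. (1 / (hi $ k - x $ k) - 1 / (hi $ k - lo $ k)) * bx x)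
      = (SUP x\<in>frontier B'. (1 / (hi $ k - x $ k) - 1 / (hi $ k - lo $ k)) * bx x)"
  proof (unfold bx_def,
      rule jacobi_visc_weighted_SUP_frontier[OF compact _ B'ball _ sol(3) _ bx[unfolded bx_def]])
    show "B' \<noteq> {}" using B'(2,3) frontier_subset_closed by blast
    show "lo $ k \<le> x $ k \<and> x $ k < hi $ k" if "x \<in> B'" for x using B'k[OF that] r(1) by linarith
    show "posdef (Fder F (hess u x) (grad u x))" if "x \<in> B'" for x using sol(4) that B'ball by blast
  qed
  moreover have "(SUP x\<in>frontier B'. (1 / (hi $ k - x $ k) - 1 / (hi $ k - lo $ k)) * bx x)
      \<le> 1 / r * (SUP x\<in>frontier B' - L0. bx x)"
    using B'k lohi by (intro weighted_SUP_frontier_le[OF compact _ r(1) _ L0 R bx]) auto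
  ultimately show ?thesis unfolding Let_def B'_def[symmetric] L0_def[symmetric] bx_def[symmetric] by simp
qed

end
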